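(* Let $d\ge1$ be an integer, $c\in[0,\tfrac12)$, $\alpha>1$, and $p\in(0,\tfrac12]$. Let $P$ be the distribution on $[0,1]^d$ placing mass $p$ on the point $(c,\dots,c)$ and mass $1-p$ on $(1-c,\dots,1-c)$, and let $Q$ place mass $1-p$ on $(c,\dots,c)$ and mass $p$ on $(1-c,\dots,1-c)$. Let $K=e^{-2(1/2-c)^2 d}$. If $p+K\le\tfrac12$, then $R_\alpha(\mathrm{Bern}(P),\mathrm{Bern}(Q))\ge r_\alpha(p+K)$.
   Context: For distributions $P,Q$ and $\alpha>1$, $R_\alpha(P,Q)=\frac{1}{\alpha-1}\log\int (dP/dQ)^\alpha\,dQ$ is the Rényi divergence of order $\alpha$. For $p\in[0,1]$, $r_\alpha(p)=\frac{1}{\alpha-1}\log\left(p^\alpha(1-p)^{1-\alpha}+(1-p)^\alpha p^{1-\alpha}\right)$, the Rényi divergence between the two-point distributions $(p,1-p)$ and $(1-p,p)$. For $x\in[0,1]^d$, $\mathrm{Bern}(x)$ is the random vector in $\{0,1\}^d$ with independent coordinates, coordinate $i$ equal to $1$ with probability $x_i$; for a distribution $P$ on $[0,1]^d$, $\mathrm{Bern}(P)$ is the distribution of $\mathrm{Bern}(X)$ with $X\sim P$. *)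

theory Defs
  imports "HOL-Probability.Probability"
begin

text \<open>Renyi divergence of order alpha between pmfs:
  (1/(alpha-1)) ln (sum_x P(x)^alpha Q(x)^(1-alpha)), i.e. the discrete form of
  (1/(alpha-1)) log of the integral of (dP/dQ)^alpha dQ; it is +infinity when P is not
  absolutely continuous w.r.t. Q.\<close>
definition renyi_div :: "real \<Rightarrow> 'a pmf \<Rightarrow> 'a pmf \<Rightarrow> ereal" where
  "renyi_div \<alpha> P Q =
     (if set_pmf P \<subseteq> set_pmf Q
      then ereal (1 / (\<alpha> - 1) *
             ln (infsum (\<lambda>x. pmf P x powr \<alpha> * pmf Q x powr (1 - \<alpha>)) (set_pmf Q)))
      else \<infinity>)"

definition renyi_r :: "real \<Rightarrow> real \<Rightarrow> real" where
  "renyi_r \<alpha> p = 1 / (\<alpha> - 1) *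
     ln (p powr \<alpha> * (1 - p) powr (1 - \<alpha>) + (1 - p) powr \<alpha> * p powr (1 - \<alpha>))"

text \<open>Bern(x) for x in [0,1]^d: independent coordinates 0..d-1; outcomes are
  functions nat => bool, equal to False outside {0..<d} (so the support is {0,1}^d).\<close>
definition bern_vec :: "nat \<Rightarrow> (nat \<Rightarrow> real) \<Rightarrow> (nat \<Rightarrow> bool) pmf" where
  "bern_vec d x = Pi_pmf {..<d} False (\<lambda>i. bernoulli_pmf (x i))"

definition bern_dist :: "nat \<Rightarrow> (nat \<Rightarrow> real) pmf \<Rightarrow> (nat \<Rightarrow> bool) pmf" where
  "bern_dist d P = bind_pmf P (bern_vec d)"

definition two_point :: "real \<Rightarrow> 'a \<Rightarrow> 'a \<Rightarrow> 'a pmf" where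
  "two_point q u v = map_pmf (\<lambda>b. if b then u else v) (bernoulli_pmf q)"

end

theory Submission
  imports Defs
begin

text \<open>Coarse-grain both mixtures by the event \<open>Z\<close> that fewer than half of the \<open>d\<close>
  coordinates are 1. Since \<open>(x, y) \<mapsto> x powr \<alpha> * y powr (1 - \<alpha>)\<close> is homogeneous and
  subadditive, coarse-graining can only decrease the Renyi divergence (data processing), so it
  dominates the binary divergence between \<open>(P Z, 1 - P Z)\<close> and \<open>(Q Z, 1 - Q Z)\<close>. Hoeffding's
  inequality gives \<open>P Z \<le> p + K\<close> and \<open>Q Z \<ge> 1 - p - K\<close>. For \<open>q = p + K \<le> 1/2\<close> some binary
  channel maps \<open>(P Z, 1 - P Z)\<close> to \<open>(q, 1 - q)\<close> and \<open>(Q Z, 1 - Q Z)\<close> to \<open>(1 - q, q)\<close>, and data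
  processing once more bounds the binary divergence below by \<open>r\<^sub>\<alpha>(q)\<close>.\<close>

definition renyi_term :: "real \<Rightarrow> real \<Rightarrow> real \<Rightarrow> real" where
  "renyi_term a x y = x powr a * y powr (1 - a)"

lemma renyi_r_renyi_term:
  "renyi_r \<alpha> q = 1 / (\<alpha> - 1) * ln (renyi_term \<alpha> q (1 - q) + renyi_term \<alpha> (1 - q) q)"
  by (simp add: renyi_r_def renyi_term_def)

lemma renyi_div_finite:
  assumes "finite (set_pmf Q)" "set_pmf P \<subseteq> set_pmf Q"
  shows "renyi_div \<alpha> P Q
    = ereal (1 / (\<alpha> - 1) * ln (\<Sum>x\<in>set_pmf Q. renyi_term \<alpha> (pmf P x) (pmf Q x)))"
  using assms by (simp add: renyi_div_def renyi_term_def)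

lemma renyi_term_perspective:
  assumes "y > 0"
  shows "renyi_term a x y = y * (x / y) powr a"
proof -
  have "y * (x / y) powr a = x powr a * (y powr 1 / y powr a)"
    using assms by (simp add: powr_divide)
  also have "y powr 1 / y powr a = y powr (1 - a)"
    by (simp add: powr_diff)
  finally show ?thesis
    by (simp add: renyi_term_def)
qed

lemma renyi_term_scale:
  assumes "s \<ge> 0" "x \<ge> 0" "y \<ge> 0"
  shows "renyi_term a (s * x) (s * y) = s * renyi_term a x y"
proof (cases "s = 0")
  case False
  then have "s powr a * s powr (1 - a) = s"
    using assms by (simp flip: powr_add)
  then show ?thesis
    using assms by (simp add: renyi_term_def powr_mult algebra_simps)
qed (simp add: renyi_term_def)

lemma renyi_term_antimono_right:
  assumes "a \<ge> 1" "x \<ge> 0" "0 < y" "y \<le> y'"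
  shows "renyi_term a x y' \<le> renyi_term a x y"
  unfolding renyi_term_def using assms by (intro mult_left_mono powr_mono2') auto

lemma renyi_term_add_le:
  assumes a: "a > 1" and nonneg: "x1 \<ge> 0" "x2 \<ge> 0" "y1 \<ge> 0" "y2 \<ge> 0"
    and abs_cont: "y1 = 0 \<Longrightarrow> x1 = 0" "y2 = 0 \<Longrightarrow> x2 = 0"
  shows "renyi_term a (x1 + x2) (y1 + y2) \<le> renyi_term a x1 y1 + renyi_term a x2 y2"
proof -
  consider "y1 = 0 \<or> y2 = 0" | "x1 = 0" "y1 > 0" "y2 > 0" | "x2 = 0" "y1 > 0" "y2 > 0"
    | "x1 > 0" "x2 > 0" "y1 > 0" "y2 > 0"
    using nonneg by fastforce
  then show ?thesis
  proof cases
    case 1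
    then show ?thesis
      using abs_cont by (auto simp: renyi_term_def)
  next
    case 2
    then show ?thesis
      using renyi_term_antimono_right[of a x2 y2 "y1 + y2"] a nonneg by (simp add: renyi_term_def)
  next
    case 3
    then show ?thesis
      using renyi_term_antimono_right[of a x1 y1 "y1 + y2"] a nonneg by (simp add: renyi_term_def)
  next
    case 4
    define Y where "Y = y1 + y2"
    have Y: "Y > 0"
      using 4 by (simp add: Y_def)
    have weights: "1 - y2 / Y = y1 / Y"
      using Y by (simp add: Y_def field_simps)
    have mean: "(x1 + x2) / Y = (1 - y2 / Y) * (x1 / y1) + (y2 / Y) * (x2 / y2)"
      using 4 by (simp add: weights add_divide_distrib)
    have "((x1 + x2) / Y) powr a \<le> (1 - y2 / Y) * (x1 / y1) powr a + (y2 / Y) * (x2 / y2) powr a"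
      unfolding mean using 4 a Y
      by (intro convex_onD[OF powr_convex, simplified]) (auto simp: Y_def)
    then have "Y * ((x1 + x2) / Y) powr a
        \<le> Y * ((1 - y2 / Y) * (x1 / y1) powr a + (y2 / Y) * (x2 / y2) powr a)"
      using Y by (intro mult_left_mono) auto
    also have "\<dots> = y1 * (x1 / y1) powr a + y2 * (x2 / y2) powr a"
      using Y by (simp add: weights field_simps)
    finally show ?thesis
      using 4 Y by (simp add: renyi_term_perspective Y_def)
  qed
qed

lemma renyi_term_sum_le:
  fixes x y :: "'b \<Rightarrow> real"
  assumes "finite S" "a > 1" "\<And>i. i \<in> S \<Longrightarrow> x i \<ge> 0" "\<And>i. i \<in> S \<Longrightarrow> y i \<ge> 0"
    "\<And>i. i \<in> S \<Longrightarrow> y i = 0 \<Longrightarrow> x i = 0"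
  shows "renyi_term a (sum x S) (sum y S) \<le> (\<Sum>i\<in>S. renyi_term a (x i) (y i))"
  using assms
proof (induction S rule: finite_induct)
  case empty
  then show ?case
    by (simp add: renyi_term_def)
next
  case (insert i F)
  have "sum y F = 0 \<Longrightarrow> sum x F = 0"
    using insert.prems insert.hyps by (simp add: sum_nonneg_eq_0_iff)
  then have "renyi_term a (x i + sum x F) (y i + sum y F)
      \<le> renyi_term a (x i) (y i) + renyi_term a (sum x F) (sum y F)"
    using insert.prems by (intro renyi_term_add_le) (auto intro: sum_nonneg)
  also have "\<dots> \<le> renyi_term a (x i) (y i) + (\<Sum>j\<in>F. renyi_term a (x j) (y j))"
    using insert.IH insert.prems by auto
  finally show ?case
    using insert.hyps by simp
qed

lemma prob_eq_sum_pmf_Int: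
  assumes "finite S" "set_pmf P \<subseteq> S"
  shows "measure_pmf.prob P E = sum (pmf P) (S \<inter> E)"
proof -
  have "measure_pmf.prob P E = measure_pmf.prob P (E \<inter> set_pmf P)"
    by (simp add: measure_Int_set_pmf)
  also have "E \<inter> set_pmf P = (S \<inter> E) \<inter> set_pmf P"
    using assms by auto
  finally show ?thesis
    using assms by (simp add: measure_Int_set_pmf measure_measure_pmf_finite)
qed

lemma renyi_term_prob_le_sum:
  assumes "\<alpha> > 1" "finite (set_pmf Q)" "set_pmf P \<subseteq> set_pmf Q"
  shows "renyi_term \<alpha> (measure_pmf.prob P E) (measure_pmf.prob Q E)
       + renyi_term \<alpha> (1 - measure_pmf.prob P E) (1 - measure_pmf.prob Q E)
     \<le> (\<Sum>x\<in>set_pmf Q. renyi_term \<alpha> (pmf P x) (pmf Q x))"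
proof -
  let ?S = "set_pmf Q" and ?F = "\<lambda>x. renyi_term \<alpha> (pmf P x) (pmf Q x)"
  have block: "renyi_term \<alpha> (measure_pmf.prob P A) (measure_pmf.prob Q A) \<le> sum ?F (?S \<inter> A)" for A
  proof -
    have "renyi_term \<alpha> (measure_pmf.prob P A) (measure_pmf.prob Q A)
        = renyi_term \<alpha> (sum (pmf P) (?S \<inter> A)) (sum (pmf Q) (?S \<inter> A))"
      using assms by (simp add: prob_eq_sum_pmf_Int)
    also have "\<dots> \<le> sum ?F (?S \<inter> A)"
      using assms by (intro renyi_term_sum_le) (auto simp: set_pmf_iff)
    finally show ?thesis .
  qed
  have compl: "measure_pmf.prob M (- E) = 1 - measure_pmf.prob M E" for M :: "'a pmf"
    using measure_pmf.prob_compl[of E M] by (simp add: Compl_eq_Diff_UNIV)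
  have "sum ?F ?S = sum ?F (?S \<inter> E) + sum ?F (?S \<inter> - E)"
    using assms by (metis Diff_eq sum.Int_Diff)
  then show ?thesis
    using block[of E] block[of "- E"] by (simp add: compl)
qed

lemma binary_channel_exists:
  fixes u v q :: real
  assumes "0 \<le> u" "u \<le> q" "q \<le> 1/2" "1 - q \<le> v" "v \<le> 1"
  obtains s t where "0 \<le> s" "s \<le> 1" "0 \<le> t" "t \<le> 1"
    and "u * s + (1 - u) * t = q" and "v * s + (1 - v) * t = 1 - q"
proof (cases "u = v")
  case True
  then have "q = 1/2"
    using assms by linarith
  with True show ?thesis
    by (intro that[of "1/2" "1/2"]) (auto simp: field_simps)
next
  case False
  then have vu: "v - u > 0"
    using assms by linarith
  txt \<open>Subtracting the two equations forces \<open>s - t = r\<close>.\<close>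
  define r where "r = (1 - 2 * q) / (v - u)"
  have r: "0 \<le> r" "(v - u) * r = 1 - 2 * q"
    using vu assms by (auto simp: r_def)
  have "u * (1 - 2 * q) \<le> q * (v - u)"
    using mult_mono[of u q "1 - q" v] assms by (simp add: algebra_simps)
  then have ur: "u * r \<le> q"
    using vu by (simp add: r_def field_simps)
  have "(1 - u) * (1 - 2 * q) \<le> (1 - q) * (v - u)"
    using mult_mono[of "1 - v" q "1 - q" "1 - u"] assms by (simp add: algebra_simps)
  then have "(1 - u) * r \<le> 1 - q"
    using vu by (simp add: r_def field_simps)
  then show ?thesis
    using r ur by (intro that[of "q - u * r + r" "q - u * r"]) (auto simp: algebra_simps)
qed

lemma renyi_term_binary_channel_le:
  assumes a: "a > 1" and uv: "0 \<le> u" "u \<le> 1" "0 \<le> v" "v \<le> 1"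
    and abs_cont: "v = 0 \<Longrightarrow> u = 0" "v = 1 \<Longrightarrow> u = 1"
    and st: "0 \<le> s" "s \<le> 1" "0 \<le> t" "t \<le> 1"
  shows "renyi_term a (u * s + (1 - u) * t) (v * s + (1 - v) * t)
       + renyi_term a (u * (1 - s) + (1 - u) * (1 - t)) (v * (1 - s) + (1 - v) * (1 - t))
     \<le> renyi_term a u v + renyi_term a (1 - u) (1 - v)"
proof -
  have row: "renyi_term a (r * u + r' * (1 - u)) (r * v + r' * (1 - v))
      \<le> r * renyi_term a u v + r' * renyi_term a (1 - u) (1 - v)" if "0 \<le> r" "0 \<le> r'" for r r'
  proof -
    have "renyi_term a (r * u + r' * (1 - u)) (r * v + r' * (1 - v))
        \<le> renyi_term a (r * u) (r * v) + renyi_term a (r' * (1 - u)) (r' * (1 - v))"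
      using a uv abs_cont that by (intro renyi_term_add_le) auto
    also have "\<dots> = r * renyi_term a u v + r' * renyi_term a (1 - u) (1 - v)"
      using uv that by (simp add: renyi_term_scale)
    finally show ?thesis .
  qed
  show ?thesis
    using row[of s t] row[of "1 - s" "1 - t"] st by (simp add: algebra_simps)
qed

lemma renyi_term_binary_le:
  assumes "a > 1" "0 \<le> u" "u \<le> q" "q \<le> 1/2" "1 - q \<le> v" "v \<le> 1"
    and "v = 1 \<Longrightarrow> u = 1"
  shows "renyi_term a q (1 - q) + renyi_term a (1 - q) q
     \<le> renyi_term a u v + renyi_term a (1 - u) (1 - v)"
proof -
  obtain s t where st: "0 \<le> s" "s \<le> 1" "0 \<le> t" "t \<le> 1"
    and q: "u * s + (1 - u) * t = q" and q': "v * s + (1 - v) * t = 1 - q"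
    using binary_channel_exists assms by metis
  have q_compl: "u * (1 - s) + (1 - u) * (1 - t) = 1 - q" "v * (1 - s) + (1 - v) * (1 - t) = q"
    using q q' by (simp_all add: algebra_simps)
  have "renyi_term a (u * s + (1 - u) * t) (v * s + (1 - v) * t)
      + renyi_term a (u * (1 - s) + (1 - u) * (1 - t)) (v * (1 - s) + (1 - v) * (1 - t))
    \<le> renyi_term a u v + renyi_term a (1 - u) (1 - v)"
    using assms st by (intro renyi_term_binary_channel_le) auto
  then show ?thesis
    by (simp only: q q' q_compl)
qed

lemma prob_eq_1_if_set_pmf_subset:
  assumes "set_pmf P \<subseteq> set_pmf Q" "measure_pmf.prob Q E = 1"
  shows "measure_pmf.prob P E = 1"
  using assms by (auto simp: measure_pmf.prob_eq_1 AE_measure_pmf_iff)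

lemma measure_pmf_prob_bind_pmf:
  "measure_pmf.prob (bind_pmf M f) E = (\<integral>x. measure_pmf.prob (f x) E \<partial>M)"
  unfolding measure_pmf_bind
  by (intro measure_pmf.measure_bind[where N="count_space UNIV"])
     (auto simp: space_subprob_algebra measure_pmf.prob_space_axioms
       intro: measurable_measure_pmf prob_space_imp_subprob_space)

lemma bern_dist_two_point:
  "bern_dist d (two_point w x y)
    = bind_pmf (bernoulli_pmf w) (\<lambda>b. if b then bern_vec d x else bern_vec d y)"
  unfolding bern_dist_def two_point_def bind_map_pmf by (intro bind_pmf_cong) auto

lemma prob_bern_dist_two_point:
  assumes "0 \<le> w" "w \<le> 1"
  shows "measure_pmf.prob (bern_dist d (two_point w x y)) E
    = w * measure_pmf.prob (bern_vec d x) E + (1 - w) * measure_pmf.prob (bern_vec d y) E"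
  using assms by (simp add: bern_dist_two_point measure_pmf_prob_bind_pmf mult.commute)

lemma set_pmf_bern_dist_two_point:
  assumes "0 < w" "w < 1"
  shows "set_pmf (bern_dist d (two_point w x y)) = set_pmf (bern_vec d x) \<union> set_pmf (bern_vec d y)"
  using assms by (auto simp: bern_dist_two_point split: if_splits)

lemma finite_set_pmf_bern_dist: "finite (set_pmf (bern_dist d P))"
proof (rule finite_subset)
  show "set_pmf (bern_dist d P) \<subseteq> PiE_dflt {..<d} False (\<lambda>_. UNIV)"
    using set_Pi_pmf_subset[of "{..<d}" False]
    by (auto simp: bern_dist_def bern_vec_def PiE_dflt_def)
qed auto

definition ones_count :: "nat \<Rightarrow> (nat \<Rightarrow> bool) \<Rightarrow> real" where
  "ones_count d x = (\<Sum>i<d. if x i then 1 else 0)"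

lemma prob_bern_vec_ones_count_ge_half:
  assumes d: "d > 0" and c: "0 \<le> c" "c \<le> 1/2"
  shows "measure_pmf.prob (bern_vec d (\<lambda>_. c)) {x. ones_count d x \<ge> d / 2}
    \<le> exp (- 2 * (1/2 - c)^2 * real d)"
proof -
  interpret binomial_distribution d c
    using c by unfold_locales auto
  have "measure_pmf.prob (bern_vec d (\<lambda>_. c)) {x. ones_count d x \<ge> d / 2}
      = measure_pmf.prob (binomial_pmf d c) {x. real x \<ge> d / 2}"
    unfolding bern_vec_def ones_count_def
    using prob_binomial_pmf_conv_coins[OF d, of "\<lambda>y. y \<ge> d / 2"] by simp
  also have "{x. real x \<ge> d / 2} = {x. c + (1/2 - c) \<le> real x / real d}"
    using d by (auto simp: field_simps)
  also have "measure_pmf.prob (binomial_pmf d c) \<dots> \<le> exp (real_of_int (- 2 * int d) * (1/2 - c)\<^sup>2)"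
    using c by (intro prob_ge'[OF d]) auto
  also have "\<dots> = exp (- 2 * (1/2 - c)^2 * real d)"
    by simp
  finally show ?thesis .
qed

lemma prob_bern_vec_ones_count_less_half:
  assumes d: "d > 0" and c: "0 \<le> c" "c \<le> 1/2"
  shows "measure_pmf.prob (bern_vec d (\<lambda>_. 1 - c)) {x. ones_count d x < d / 2}
    \<le> exp (- 2 * (1/2 - c)^2 * real d)"
proof -
  interpret binomial_distribution d "1 - c"
    using c by unfold_locales auto
  have "measure_pmf.prob (bern_vec d (\<lambda>_. 1 - c)) {x. ones_count d x < d / 2}
      = measure_pmf.prob (binomial_pmf d (1 - c)) {x. real x < d / 2}"
    unfolding bern_vec_def ones_count_def
    using prob_binomial_pmf_conv_coins[OF d, of "\<lambda>y. y < d / 2"] by simp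
  also have "\<dots> \<le> measure_pmf.prob (binomial_pmf d (1 - c)) {x. real x / real d \<le> (1 - c) - (1/2 - c)}"
    using d by (intro measure_pmf.finite_measure_mono) (auto simp: field_simps)
  also have "\<dots> \<le> exp (real_of_int (- 2 * int d) * (1/2 - c)\<^sup>2)"
    using c by (intro prob_le'[OF d]) auto
  also have "\<dots> = exp (- 2 * (1/2 - c)^2 * real d)"
    by simp
  finally show ?thesis .
qed

lemma prob_bern_mixture_ones_count_less_half:
  assumes "d > 0" "0 \<le> c" "c \<le> 1/2" "0 \<le> w" "w \<le> 1"
  defines "K \<equiv> exp (- 2 * (1/2 - c)^2 * real d)"
    and "u \<equiv> measure_pmf.prob (bern_dist d (two_point w (\<lambda>_. c) (\<lambda>_. 1 - c)))
                {x. ones_count d x < d / 2}"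
  shows "w - K \<le> u" "u \<le> w + K"
proof -
  let ?Z = "{x. ones_count d x < d / 2}"
  let ?a = "measure_pmf.prob (bern_vec d (\<lambda>_. c)) ?Z"
    and ?b = "measure_pmf.prob (bern_vec d (\<lambda>_. 1 - c)) ?Z"
  have u: "u = w * ?a + (1 - w) * ?b"
    using assms by (simp add: u_def prob_bern_dist_two_point)
  have K: "0 \<le> K" "w * K \<le> K" "(1 - w) * K \<le> K"
    using assms by (simp_all add: K_def mult_left_le_one_le)
  have "1 - ?a = measure_pmf.prob (bern_vec d (\<lambda>_. c)) (UNIV - ?Z)"
    using measure_pmf.prob_compl[of ?Z "bern_vec d (\<lambda>_. c)"] by simp
  also have "UNIV - ?Z = {x. ones_count d x \<ge> d / 2}"
    by auto
  also have "measure_pmf.prob (bern_vec d (\<lambda>_. c)) \<dots> \<le> K"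
    unfolding K_def using assms by (intro prob_bern_vec_ones_count_ge_half)
  finally have "w * (1 - K) \<le> w * ?a"
    using assms by (intro mult_left_mono) auto
  then have "w - w * K \<le> w * ?a"
    by (simp add: right_diff_distrib)
  moreover have "0 \<le> (1 - w) * ?b"
    using assms by simp
  ultimately show "w - K \<le> u"
    using K u by linarith
  have "?b \<le> K"
    unfolding K_def using assms by (intro prob_bern_vec_ones_count_less_half)
  then have "w * ?a + (1 - w) * ?b \<le> w * 1 + (1 - w) * K"
    using assms by (intro add_mono mult_mono) auto
  then show "u \<le> w + K"
    using K by (simp add: u)
qed

theorem theorem2:
  fixes d :: nat and c \<alpha> p :: real
  assumes "d \<ge> 1" and "0 \<le> c" and "c < 1/2" and "\<alpha> > 1"
    and "0 < p" and "p \<le> 1/2"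
    and "p + exp (- 2 * (1/2 - c)^2 * real d) \<le> 1/2"
  shows "ereal (renyi_r \<alpha> (p + exp (- 2 * (1/2 - c)^2 * real d)))
     \<le> renyi_div \<alpha>
          (bern_dist d (two_point p (\<lambda>_. c) (\<lambda>_. 1 - c)))
          (bern_dist d (two_point (1 - p) (\<lambda>_. c) (\<lambda>_. 1 - c)))"
proof -
  define K where "K = exp (- 2 * (1/2 - c)^2 * real d)"
  define q where "q = p + K"
  define P where "P = bern_dist d (two_point p (\<lambda>_. c) (\<lambda>_. 1 - c))"
  define Q where "Q = bern_dist d (two_point (1 - p) (\<lambda>_. c) (\<lambda>_. 1 - c))"
  define Z where "Z = {x. ones_count d x < d / 2}"
  have supp: "set_pmf P = set_pmf Q"
    using assms by (simp add: P_def Q_def set_pmf_bern_dist_two_point)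
  have fin: "finite (set_pmf Q)"
    by (simp only: Q_def finite_set_pmf_bern_dist)
  have u: "measure_pmf.prob P Z \<le> q" and v: "1 - q \<le> measure_pmf.prob Q Z"
    using prob_bern_mixture_ones_count_less_half[of d c p]
      prob_bern_mixture_ones_count_less_half[of d c "1 - p"] assms
    by (simp_all add: P_def Q_def Z_def q_def K_def)
  have q: "0 < q" "q \<le> 1/2"
    using assms by (simp_all add: q_def K_def add_pos_pos)
  have "renyi_term \<alpha> q (1 - q) + renyi_term \<alpha> (1 - q) q
    \<le> renyi_term \<alpha> (measure_pmf.prob P Z) (measure_pmf.prob Q Z)
      + renyi_term \<alpha> (1 - measure_pmf.prob P Z) (1 - measure_pmf.prob Q Z)"
    using assms u v q prob_eq_1_if_set_pmf_subset[of P Q Z] supp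
    by (intro renyi_term_binary_le) auto
  also have "\<dots> \<le> (\<Sum>x\<in>set_pmf Q. renyi_term \<alpha> (pmf P x) (pmf Q x))"
    using assms fin supp by (intro renyi_term_prob_le_sum) auto
  finally have "renyi_r \<alpha> q \<le> 1 / (\<alpha> - 1) * ln (\<Sum>x\<in>set_pmf Q. renyi_term \<alpha> (pmf P x) (pmf Q x))"
    using assms q unfolding renyi_r_renyi_term
    by (intro mult_left_mono ln_mono add_pos_pos) (auto simp: renyi_term_def)
  then show ?thesis
    using renyi_div_finite[OF fin] supp by (simp add: P_def Q_def q_def K_def)
qed

end
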